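(* Let $G=(V,D,B)$ be a simple mixed graph and $\Sigma$ a positive definite $V\times V$ matrix. Then $\Sigma\in\mathcal{M}_G$ if and only if $\mathcal{R}(\Sigma)\in\mathcal{M}_G$, where $\mathcal{R}(\Sigma)_{ij}=\Sigma_{ij}/\sqrt{\Sigma_{ii}\Sigma_{jj}}$.
   Context: A mixed graph with finite vertex set $V$ is a triple $G=(V,D,B)$ with $D$ a set of ordered pairs $(i,j)$, $i\ne j$ (directed edges) and $B$ a set of unordered pairs $\{i,j\}$, $i\ne j$ (bidirected edges); it is simple if any two distinct nodes are joined by at most one edge. $\mathbb{R}^D_{\mathrm{reg}}$ is the set of real $V\times V$ matrices $\Lambda$ with $\lambda_{ij}=0$ for $(i,j)\notin D$ and $I-\Lambda$ invertible; $\mathit{PD}(B)$ is the set of positive definite symmetric matrices $\Omega$ with $\omega_{ij}=0$ for $i\ne j$, $\{i,j\}\notin B$. $\mathcal{M}_G=\{(I-\Lambda)^{-T}\Omega(I-\Lambda)^{-1}:\Lambda\in\mathbb{R}^D_{\mathrm{reg}},\Omega\in\mathit{PD}(B)\}$. *)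

theory Defs
  imports "HOL-Analysis.Analysis"
begin

text \<open>A mixed graph on the finite vertex type 'n: directed edges D (ordered pairs)
  and bidirected edges B (unordered pairs, represented as two-element sets).\<close>

definition mixed_graph :: "('n \<times> 'n) set \<Rightarrow> 'n set set \<Rightarrow> bool" where
  "mixed_graph D B \<longleftrightarrow> (\<forall>(i,j)\<in>D. i \<noteq> j) \<and> (\<forall>e\<in>B. \<exists>i j. i \<noteq> j \<and> e = {i,j})"

definition simple_mixed_graph :: "('n \<times> 'n) set \<Rightarrow> 'n set set \<Rightarrow> bool" where
  "simple_mixed_graph D B \<longleftrightarrow> mixed_graph D B \<and>
     (\<forall>i j. \<not> ((i,j) \<in> D \<and> (j,i) \<in> D)) \<and>
     (\<forall>i j. \<not> ((i,j) \<in> D \<and> {i,j} \<in> B))"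

definition pos_def :: "real^'n^'n \<Rightarrow> bool" where
  "pos_def S \<longleftrightarrow> transpose S = S \<and> (\<forall>x. x \<noteq> 0 \<longrightarrow> x \<bullet> (S *v x) > 0)"

definition RegD :: "('n::finite \<times> 'n) set \<Rightarrow> (real^'n^'n) set" where
  "RegD D = {L. (\<forall>i j. (i,j) \<notin> D \<longrightarrow> L $ i $ j = 0) \<and> invertible (mat 1 - L)}"

definition PDB :: "'n::finite set set \<Rightarrow> (real^'n^'n) set" where
  "PDB B = {W. pos_def W \<and> (\<forall>i j. i \<noteq> j \<and> {i,j} \<notin> B \<longrightarrow> W $ i $ j = 0)}"

definition model :: "('n::finite \<times> 'n) set \<Rightarrow> 'n set set \<Rightarrow> (real^'n^'n) set" where
  "model D B = {transpose (matrix_inv (mat 1 - L)) ** W ** matrix_inv (mat 1 - L) | L W.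
                  L \<in> RegD D \<and> W \<in> PDB B}"

definition corr :: "real^'n^'n \<Rightarrow> real^'n^'n" where
  "corr S = (\<chi> i j. S $ i $ j / sqrt (S $ i $ i * S $ j $ j))"

end

theory Submission
  imports Defs
begin

text \<open>Rescaling the coordinates by an invertible diagonal matrix \<open>\<Delta>\<close> maps the model into
  itself: if \<open>\<Sigma> = (I - \<Lambda>)\<^sup>-\<^sup>T \<Omega> (I - \<Lambda>)\<^sup>-\<^sup>1\<close>, then \<open>\<Delta> \<Sigma> \<Delta>\<close> has the same form with
  \<open>\<Lambda>' = \<Delta>\<^sup>-\<^sup>1 \<Lambda> \<Delta>\<close> and \<open>\<Omega>' = \<Delta> \<Omega> \<Delta>\<close>, because \<open>I - \<Lambda>' = \<Delta>\<^sup>-\<^sup>1 (I - \<Lambda>) \<Delta>\<close>. Both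
  conjugations preserve the support pattern, invertibility and positive definiteness.
  Since \<open>\<R>(\<Sigma>) = \<Delta> \<Sigma> \<Delta>\<close> for \<open>\<Delta> = diag(\<Sigma>\<^sub>i\<^sub>i)\<^sup>-\<^sup>1\<^sup>/\<^sup>2\<close>, applying this with \<open>\<Delta>\<close>
  and with \<open>\<Delta>\<^sup>-\<^sup>1\<close> gives both directions.\<close>

lemma matrix_inv_right:
  fixes A :: "'a::field^'n^'n"
  assumes "invertible A"
  shows "A ** matrix_inv A = mat 1"
  using someI_ex[OF assms[unfolded invertible_def]] by (simp add: matrix_inv_def)

lemma matrix_inv_unique:
  fixes A B :: "'a::field^'n^'n"
  assumes "A ** B = mat 1"
  shows "matrix_inv A = B"
proof -
  have "invertible A"
    using assms invertible_right_inverse by blast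
  then have "matrix_inv A ** A = mat 1"
    using matrix_inv_right matrix_left_right_inverse by blast
  then have "matrix_inv A = matrix_inv A ** (A ** B)"
    using assms by simp
  also have "\<dots> = B"
    by (simp add: matrix_mul_assoc \<open>matrix_inv A ** A = mat 1\<close>)
  finally show ?thesis .
qed

lemma matrix_inv_similar:
  fixes M P Q :: "'a::field^'n^'n"
  assumes "Q ** P = mat 1" and "P ** Q = mat 1" and "invertible M"
  shows "invertible (Q ** M ** P)" and "matrix_inv (Q ** M ** P) = Q ** matrix_inv M ** P"
proof -
  have "(Q ** M ** P) ** (Q ** matrix_inv M ** P) = Q ** (M ** (P ** Q) ** matrix_inv M) ** P"
    by (simp add: matrix_mul_assoc)
  also have "\<dots> = mat 1"
    using assms by (simp add: matrix_inv_right matrix_mul_assoc)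
  finally have right_inverse: "(Q ** M ** P) ** (Q ** matrix_inv M ** P) = mat 1" .
  then show "invertible (Q ** M ** P)"
    using invertible_right_inverse by blast
  show "matrix_inv (Q ** M ** P) = Q ** matrix_inv M ** P"
    using right_inverse by (rule matrix_inv_unique)
qed

lemma pos_def_congruence:
  fixes W P :: "real^'n^'n"
  assumes "pos_def W" and "invertible P"
  shows "pos_def (transpose P ** W ** P)"
  unfolding pos_def_def
proof (intro conjI allI impI)
  show "transpose (transpose P ** W ** P) = transpose P ** W ** P"
    using assms(1) by (simp add: pos_def_def matrix_transpose_mul matrix_mul_assoc)
next
  fix x :: "real^'n"
  assume "x \<noteq> 0"
  then have "P *v x \<noteq> 0"
    using inj_matrix_vector_mult[OF assms(2)] by (metis injD matrix_vector_mult_0_right)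
  then have "0 < (P *v x) \<bullet> (W *v (P *v x))"
    using assms(1) by (simp add: pos_def_def)
  also have "\<dots> = x \<bullet> ((transpose P ** W ** P) *v x)"
    using transpose_matrix_vector[of "transpose P" x]
    by (simp only: transpose_transpose matrix_vector_mul_assoc[symmetric] dot_lmul_matrix)
  finally show "0 < x \<bullet> ((transpose P ** W ** P) *v x)" .
qed

lemma pos_def_diagonal_pos:
  assumes "pos_def S"
  shows "0 < S $ i $ i"
proof -
  have "0 < axis i 1 \<bullet> (S *v axis i 1)"
    using assms by (simp add: pos_def_def axis_eq_0_iff)
  also have "axis i 1 \<bullet> (S *v axis i 1) = S $ i $ i"
    by (simp add: matrix_vector_mult_basis inner_axis' column_def)
  finally show ?thesis .
qed

definition diag_mat :: "'a::semiring_1^'n::finite \<Rightarrow> 'a^'n^'n" where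
  "diag_mat d = (\<chi> i j. if i = j then d $ i else 0)"

lemma diag_mat_mult_nth [simp]: "(diag_mat d ** M) $ i $ j = d $ i * M $ i $ j"
proof -
  have "(diag_mat d ** M) $ i $ j = (\<Sum>k\<in>UNIV. if k = i then d $ i * M $ i $ j else 0)"
    unfolding diag_mat_def matrix_matrix_mult_def vec_lambda_beta by (rule sum.cong) auto
  then show ?thesis by simp
qed

lemma mult_diag_mat_nth [simp]: "(M ** diag_mat d) $ i $ j = M $ i $ j * d $ j"
proof -
  have "(M ** diag_mat d) $ i $ j = (\<Sum>k\<in>UNIV. if k = j then M $ i $ j * d $ j else 0)"
    unfolding diag_mat_def matrix_matrix_mult_def vec_lambda_beta by (rule sum.cong) auto
  then show ?thesis by simp
qed

lemma transpose_diag_mat [simp]: "transpose (diag_mat d) = diag_mat d"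
  by (simp add: diag_mat_def transpose_def vec_eq_iff)

lemma diag_mat_mult_inverse:
  fixes d :: "'a::field^'n::finite"
  assumes "\<forall>i. d $ i \<noteq> 0"
  shows "diag_mat d ** diag_mat (\<chi> i. inverse (d $ i)) = mat 1"
    and "diag_mat (\<chi> i. inverse (d $ i)) ** diag_mat d = mat 1"
  using assms by (auto simp: vec_eq_iff mat_def diag_mat_def[of "\<chi> i. inverse (d $ i)"])

lemma invertible_diag_mat:
  fixes d :: "'a::field^'n::finite"
  assumes "\<forall>i. d $ i \<noteq> 0"
  shows "invertible (diag_mat d)"
  using diag_mat_mult_inverse[OF assms] invertible_def by blast

lemma mat_1_minus_diag_conj:
  fixes d :: "'a::field^'n::finite"
  assumes "\<forall>i. d $ i \<noteq> 0"
  shows "mat 1 - diag_mat (\<chi> i. inverse (d $ i)) ** L ** diag_mat d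
    = diag_mat (\<chi> i. inverse (d $ i)) ** (mat 1 - L) ** diag_mat d"
  using assms by (simp add: vec_eq_iff mat_def right_diff_distrib left_diff_distrib)

lemma RegD_diag_conj:
  fixes d :: "real^'n::finite"
  assumes "L \<in> RegD D" and "\<forall>i. d $ i \<noteq> 0"
  shows "diag_mat (\<chi> i. inverse (d $ i)) ** L ** diag_mat d \<in> RegD D"
proof -
  have "invertible (diag_mat (\<chi> i. inverse (d $ i)) ** (mat 1 - L) ** diag_mat d)"
    using assms by (intro matrix_inv_similar diag_mat_mult_inverse) (auto simp: RegD_def)
  then show ?thesis
    using assms by (simp add: RegD_def mat_1_minus_diag_conj)
qed

lemma PDB_diag_congruence:
  fixes d :: "real^'n::finite"
  assumes "W \<in> PDB B" and "\<forall>i. d $ i \<noteq> 0"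
  shows "diag_mat d ** W ** diag_mat d \<in> PDB B"
  using assms pos_def_congruence[of W "diag_mat d"] invertible_diag_mat[of d]
  by (simp add: PDB_def)

lemma model_diag_congruence:
  fixes d :: "real^'n::finite"
  assumes "S \<in> model D B" and "\<forall>i. d $ i \<noteq> 0"
  shows "diag_mat d ** S ** diag_mat d \<in> model D B"
proof -
  obtain L W where S: "S = transpose (matrix_inv (mat 1 - L)) ** W ** matrix_inv (mat 1 - L)"
    and L: "L \<in> RegD D" and W: "W \<in> PDB B"
    using assms(1) unfolding model_def by blast
  let ?P = "diag_mat d" and ?Q = "diag_mat (\<chi> i. inverse (d $ i))"
  let ?A = "matrix_inv (mat 1 - L)" and ?L' = "?Q ** L ** ?P" and ?W' = "?P ** W ** ?P"
  note QP = diag_mat_mult_inverse(2)[OF assms(2)] and PQ = diag_mat_mult_inverse(1)[OF assms(2)]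
  have A': "matrix_inv (mat 1 - ?L') = ?Q ** ?A ** ?P"
    using L by (simp add: mat_1_minus_diag_conj[OF assms(2)] matrix_inv_similar(2)[OF QP PQ] RegD_def)
  have "?P ** S ** ?P = ?P ** transpose ?A ** (?Q ** ?P) ** W ** (?P ** ?Q) ** ?A ** ?P"
    unfolding S QP PQ by (simp add: matrix_mul_assoc)
  also have "\<dots> = transpose (matrix_inv (mat 1 - ?L')) ** ?W' ** matrix_inv (mat 1 - ?L')"
    unfolding A' by (simp add: matrix_transpose_mul matrix_mul_assoc)
  finally show ?thesis
    using RegD_diag_conj[OF L assms(2)] PDB_diag_congruence[OF W assms(2)]
    unfolding model_def by blast
qed

lemma corr_diag_congruence:
  assumes "\<And>i. 0 < S $ i $ i"
  shows "corr S = diag_mat (\<chi> i. inverse (sqrt (S $ i $ i))) ** S ** diag_mat (\<chi> i. inverse (sqrt (S $ i $ i)))"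
    and "S = diag_mat (\<chi> i. sqrt (S $ i $ i)) ** corr S ** diag_mat (\<chi> i. sqrt (S $ i $ i))"
proof -
  have "S $ i $ i \<noteq> 0" for i
    using assms[of i] by linarith
  then show "corr S = diag_mat (\<chi> i. inverse (sqrt (S $ i $ i))) ** S ** diag_mat (\<chi> i. inverse (sqrt (S $ i $ i)))"
    and "S = diag_mat (\<chi> i. sqrt (S $ i $ i)) ** corr S ** diag_mat (\<chi> i. sqrt (S $ i $ i))"
    by (simp_all add: corr_def vec_eq_iff real_sqrt_mult divide_inverse)
qed

theorem lemma3:
  fixes D :: "('n::finite \<times> 'n) set" and B :: "'n set set" and S :: "real^'n^'n"
  assumes "simple_mixed_graph D B"
    and "pos_def S"
  shows "S \<in> model D B \<longleftrightarrow> corr S \<in> model D B"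
proof -
  note pos = pos_def_diagonal_pos[OF assms(2)]
  have "S $ i $ i \<noteq> 0" for i
    using pos[of i] by linarith
  then have inverse_sqrt_nonzero: "\<forall>i. (\<chi> i. inverse (sqrt (S $ i $ i))) $ i \<noteq> 0"
    and sqrt_nonzero: "\<forall>i. (\<chi> i. sqrt (S $ i $ i)) $ i \<noteq> 0"
    by simp_all
  show ?thesis
  proof
    assume "S \<in> model D B"
    from model_diag_congruence[OF this inverse_sqrt_nonzero] show "corr S \<in> model D B"
      by (simp only: corr_diag_congruence(1)[OF pos, symmetric])
  next
    assume "corr S \<in> model D B"
    from model_diag_congruence[OF this sqrt_nonzero] show "S \<in> model D B"
      by (simp only: corr_diag_congruence(2)[OF pos, symmetric])
  qed
qed

end
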